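(* Let $\Sigma\in\mathcal{G}_n$, let $S=S(\Sigma)$, $W=W(\Sigma)$, and let $Q_0$ be the unique regular rational orthogonal matrix with $Q_0^{\rm T}SQ_0=S(\Sigma^{\rm T})$, with level $\ell_0$. Let $p$ be an odd prime with $p\nmid\ell_0$. If $z$ is an integral vector with $W^{\rm T}z\equiv0\pmod p$, then $S^{\rm T}z\equiv0\pmod p$.
   Context: An oriented graph on vertices $v_1,\dots,v_n$ is a simple graph with each edge directed; its skew-adjacency matrix $S(\Sigma)=(s_{ij})$ has $s_{ij}=1$ if $(v_i,v_j)$ is an arc, $-1$ if $(v_j,v_i)$ is an arc, $0$ otherwise. The converse $\Sigma^{\rm T}$ reverses every arc, so $S(\Sigma^{\rm T})=-S(\Sigma)$. With $e$ the all-one vector, $W(\Sigma)=[e,Se,\dots,S^{n-1}e]$. $\mathcal{G}_n$ is the set of $n$-vertex oriented graphs with $2^{-\lfloor n/2\rfloor}\det W(\Sigma)$ an odd square-free integer. A rational orthogonal matrix $Q$ is regular if $Qe=e$; its level is the least positive integer $k$ with $kQ$ integral. Since $\det W(\Sigma)\ne0$, $Q_0$ exists and is unique. *)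

theory Defs
  imports "Jordan_Normal_Form.Determinant" "HOL-Computational_Algebra.Squarefree"
begin

definition oriented_graph :: "nat \<Rightarrow> (nat \<Rightarrow> nat \<Rightarrow> bool) \<Rightarrow> bool" where
  "oriented_graph n A \<longleftrightarrow> (\<forall>i j. A i j \<longrightarrow> i < n \<and> j < n \<and> i \<noteq> j \<and> \<not> A j i)"

definition skew_adj :: "nat \<Rightarrow> (nat \<Rightarrow> nat \<Rightarrow> bool) \<Rightarrow> int mat" where
  "skew_adj n A = mat n n (\<lambda>(i,j). if A i j then 1 else if A j i then -1 else 0)"

definition converse_graph :: "(nat \<Rightarrow> nat \<Rightarrow> bool) \<Rightarrow> (nat \<Rightarrow> nat \<Rightarrow> bool)" where
  "converse_graph A = (\<lambda>i j. A j i)"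

definition walk_mat :: "nat \<Rightarrow> int mat \<Rightarrow> int mat" where
  "walk_mat n S = mat n n (\<lambda>(i,j). ((S ^\<^sub>m j) *\<^sub>v vec n (\<lambda>_. 1)) $ i)"

definition in_G :: "nat \<Rightarrow> (nat \<Rightarrow> nat \<Rightarrow> bool) \<Rightarrow> bool" where
  "in_G n A \<longleftrightarrow> oriented_graph n A \<and>
     (\<exists>m::int. det (walk_mat n (skew_adj n A)) = 2 ^ (n div 2) * m \<and> odd m \<and> squarefree m)"

definition rat_orthogonal :: "nat \<Rightarrow> rat mat \<Rightarrow> bool" where
  "rat_orthogonal n Q \<longleftrightarrow> Q \<in> carrier_mat n n \<and> transpose_mat Q * Q = 1\<^sub>m n"

definition regular :: "nat \<Rightarrow> rat mat \<Rightarrow> bool" where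
  "regular n Q \<longleftrightarrow> Q *\<^sub>v vec n (\<lambda>_. 1) = vec n (\<lambda>_. 1)"

definition level :: "rat mat \<Rightarrow> nat" where
  "level Q = (LEAST k::nat. k > 0 \<and>
     (\<forall>i < dim_row Q. \<forall>j < dim_col Q. of_nat k * Q $$ (i,j) \<in> \<int>))"

end

theory Submission
  imports Defs
begin

text \<open>
  Work modulo the odd prime p and let K be the left kernel of W modulo p. Because p^2 does not
  divide det W, K is at most one-dimensional: two independent vectors of K, truncated to be
  triangular, would give an integral matrix Z with p not dividing det Z but p^2 dividing
  det (W^T Z). K is stable under S^T; for z in K this only needs (S^n e)^T z = 0 mod p, which is
  isolated by pairing the shifts (S^T)^k z with a right kernel vector of W modulo p, a column of
  adj W that is nonzero modulo p since p^2 does not divide det W. K is also stable under the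
  integral matrix P = l0 Q0, which satisfies P^T P = l0^2 I, P^T e = l0 e and S P = - P S.
  Hence S^T z = \<lambda> z and P z = \<mu> z modulo p with \<mu> invertible, and P S^T = - S^T P
  gives 2 \<lambda> \<mu> = 0, so \<lambda> = 0.
\<close>

section \<open>Integer vectors modulo a prime\<close>

definition vec_dvd :: "int \<Rightarrow> int vec \<Rightarrow> bool" where
  "vec_dvd p v \<longleftrightarrow> (\<forall>i < dim_vec v. p dvd v $ i)"

lemma vec_dvd_mult_mat_vec:
  assumes "vec_dvd p v" and "dim_col A = dim_vec v"
  shows "vec_dvd p (A *\<^sub>v v)"
  using assms by (auto simp: vec_dvd_def scalar_prod_def intro!: dvd_sum)

lemma vec_dvd_scalar_prod:
  assumes "vec_dvd p v" and "dim_vec u = dim_vec v"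
  shows "p dvd u \<bullet> v"
  using assms by (auto simp: vec_dvd_def scalar_prod_def intro!: dvd_sum)

lemma vec_dvd_lincomb_iff:
  assumes "u \<in> carrier_vec n" and "v \<in> carrier_vec n"
  shows "vec_dvd p (a \<cdot>\<^sub>v u + b \<cdot>\<^sub>v v) \<longleftrightarrow> (\<forall>i<n. p dvd a * u $ i + b * v $ i)"
  using assms by (simp add: vec_dvd_def)

lemma vec_dvd_lincomb:
  assumes "vec_dvd p u" and "vec_dvd p v" and "dim_vec u = dim_vec v"
  shows "vec_dvd p (a \<cdot>\<^sub>v u + b \<cdot>\<^sub>v v)"
  using assms by (simp add: vec_dvd_def)

lemma vec_dvd_diff:
  assumes "vec_dvd p u" and "vec_dvd p v" and "dim_vec u = dim_vec v"
  shows "vec_dvd p (u - v)"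
  using assms by (simp add: vec_dvd_def)

lemma vec_dvd_of_lincomb:
  assumes "vec_dvd p (a \<cdot>\<^sub>v u + b \<cdot>\<^sub>v v)" and "p dvd a" and "\<not> p dvd b" and "prime p"
    and "u \<in> carrier_vec n" and "v \<in> carrier_vec n"
  shows "vec_dvd p v"
  unfolding vec_dvd_def
proof (intro allI impI)
  fix i assume "i < dim_vec v"
  then have "p dvd a * u $ i + b * v $ i" and "p dvd a * u $ i"
    using assms by (auto simp: vec_dvd_lincomb_iff)
  then have "p dvd b * v $ i"
    by (simp add: dvd_add_right_iff)
  with assms(3,4) show "p dvd v $ i"
    by (simp add: prime_dvd_mult_iff)
qed

lemma mult_mat_vec_lincomb:
  fixes A :: "'a :: comm_ring_1 mat"
  assumes "A \<in> carrier_mat m n" and "u \<in> carrier_vec n" and "v \<in> carrier_vec n"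
  shows "A *\<^sub>v (a \<cdot>\<^sub>v u + b \<cdot>\<^sub>v v) = a \<cdot>\<^sub>v (A *\<^sub>v u) + b \<cdot>\<^sub>v (A *\<^sub>v v)"
  using assms by (auto simp: mult_add_distrib_mat_vec)

lemma last_nondvd_index:
  assumes v: "v \<in> carrier_vec n" and "\<not> vec_dvd p v"
  obtains i where "i < n" and "\<not> p dvd v $ i"
    and "\<And>k. i < k \<Longrightarrow> k < n \<Longrightarrow> p dvd v $ k"
proof -
  let ?I = "{i. i < dim_vec v \<and> \<not> p dvd v $ i}"
  have fin: "finite ?I" and ne: "?I \<noteq> {}" using assms by (auto simp: vec_dvd_def)
  show thesis
  proof (rule that)
    show "Max ?I < n" and "\<not> p dvd v $ Max ?I" using Max_in[OF fin ne] v by auto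
    fix k assume k: "Max ?I < k" "k < n"
    show "p dvd v $ k"
    proof (rule ccontr)
      assume "\<not> p dvd v $ k"
      then have "k \<le> Max ?I" using k(2) v by (intro Max_ge[OF fin]) simp
      with k(1) show False by simp
    qed
  qed
qed

section \<open>Kernels modulo a prime\<close>

definition lin_dependent_mod :: "int \<Rightarrow> int vec \<Rightarrow> int vec \<Rightarrow> bool" where
  "lin_dependent_mod p u v \<longleftrightarrow> (\<exists>a b. \<not> (p dvd a \<and> p dvd b) \<and> vec_dvd p (a \<cdot>\<^sub>v u + b \<cdot>\<^sub>v v))"

lemma pow_dvd_det_of_cols_dvd:
  fixes A :: "'a :: comm_ring_1 mat"
  assumes A: "A \<in> carrier_mat n n" and C: "C \<subseteq> {0..<n}"
    and dvd: "\<And>r c. c \<in> C \<Longrightarrow> r < n \<Longrightarrow> p dvd A $$ (r,c)"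
  shows "p ^ card C dvd det A"
  unfolding det_def'[OF A]
proof (rule dvd_sum)
  fix \<pi> assume "\<pi> \<in> {\<pi>. \<pi> permutes {0..<n}}"
  then have \<pi>: "\<pi> permutes {0..<n}" by simp
  let ?R = "{i\<in>{0..<n}. \<pi> i \<in> C}"
  have "\<pi> ` ?R = C"
  proof
    show "C \<subseteq> \<pi> ` ?R"
    proof
      fix c assume c: "c \<in> C"
      then have "c \<in> \<pi> ` {0..<n}" using C permutes_image[OF \<pi>] by auto
      with c show "c \<in> \<pi> ` ?R" by auto
    qed
  qed auto
  moreover have "inj_on \<pi> ?R" using permutes_inj[OF \<pi>] by (auto simp: inj_on_def)
  ultimately have "card ?R = card C" by (metis card_image)
  moreover have "(\<Prod>i\<in>?R. p) dvd (\<Prod>i\<in>?R. A $$ (i, \<pi> i))"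
    by (rule prod_dvd_prod) (use dvd in auto)
  ultimately have "p ^ card C dvd (\<Prod>i\<in>?R. A $$ (i, \<pi> i))" by simp
  also have "\<dots> dvd (\<Prod>i = 0..<n. A $$ (i, \<pi> i))"
    by (rule prod_dvd_prod_subset) auto
  finally show "p ^ card C dvd signof \<pi> * (\<Prod>i = 0..<n. A $$ (i, \<pi> i))"
    by (rule dvd_mult)
qed

lemma vec_dvd_mult_mat_vec_truncate:
  fixes M :: "int mat"
  assumes M: "M \<in> carrier_mat m n" and u: "u \<in> carrier_vec n"
    and Mu: "vec_dvd p (M *\<^sub>v u)" and tail: "\<And>k. i < k \<Longrightarrow> k < n \<Longrightarrow> p dvd u $ k"
  shows "vec_dvd p (M *\<^sub>v vec n (\<lambda>k. if k \<le> i then u $ k else 0))"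
proof -
  define t where "t = vec n (\<lambda>k. if k \<le> i then 0 else u $ k)"
  have t: "t \<in> carrier_vec n" by (simp add: t_def)
  have "vec_dvd p t" using tail by (simp add: vec_dvd_def t_def)
  then have "vec_dvd p (M *\<^sub>v t)" using M by (intro vec_dvd_mult_mat_vec) (auto simp: t_def)
  then have "vec_dvd p (M *\<^sub>v u - M *\<^sub>v t)" using Mu M by (intro vec_dvd_diff) auto
  also have "M *\<^sub>v u - M *\<^sub>v t = M *\<^sub>v (u - t)"
    using M u t by (rule mult_minus_distrib_mat_vec[symmetric])
  also have "u - t = vec n (\<lambda>k. if k \<le> i then u $ k else 0)"
    using u by (intro eq_vecI) (auto simp: t_def)
  finally show ?thesis .
qed

lemma prime_sq_dvd_det_of_two_kernel_vectors:
  fixes M :: "int mat"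
  assumes M: "M \<in> carrier_mat n n" and p: "prime p"
    and u: "u \<in> carrier_vec n" and Mu: "vec_dvd p (M *\<^sub>v u)"
    and w: "w \<in> carrier_vec n" and Mw: "vec_dvd p (M *\<^sub>v w)"
    and i: "i < n" "\<not> p dvd u $ i" "\<And>k. i < k \<Longrightarrow> k < n \<Longrightarrow> p dvd u $ k"
    and j: "j < n" "\<not> p dvd w $ j" "\<And>k. j < k \<Longrightarrow> k < n \<Longrightarrow> p dvd w $ k"
    and ij: "i \<noteq> j"
  shows "p^2 dvd det M"
proof -
  define u' where "u' = vec n (\<lambda>k. if k \<le> i then u $ k else 0)"
  define w' where "w' = vec n (\<lambda>k. if k \<le> j then w $ k else 0)"
  have Mu': "vec_dvd p (M *\<^sub>v u')"
    unfolding u'_def using M u Mu i(3) by (rule vec_dvd_mult_mat_vec_truncate)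
  have Mw': "vec_dvd p (M *\<^sub>v w')"
    unfolding w'_def using M w Mw j(3) by (rule vec_dvd_mult_mat_vec_truncate)
  define Z where "Z = mat n n (\<lambda>(r, c). if c = i then u' $ r else if c = j then w' $ r
                                         else if r = c then 1 else 0)"
  have Z: "Z \<in> carrier_mat n n" by (simp add: Z_def)
  have "det Z = (\<Prod>k = 0..<n. Z $$ (k, k))"
    using det_upper_triangular[OF _ Z] Z
    by (auto simp: upper_triangular_def Z_def u'_def w'_def prod_list_diag_prod)
  also have "\<dots> = (\<Prod>k = 0..<n. (if k = i then u $ i else 1) * (if k = j then w $ j else 1))"
    using ij by (intro prod.cong) (auto simp: Z_def u'_def w'_def)
  also have "\<dots> = u $ i * w $ j"
    using i j by (simp add: prod.distrib)
  finally have Z_coprime: "coprime (p^2) (det Z)"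
    using p i j by (simp add: prime_dvd_mult_iff prime_imp_coprime)
  have "p ^ card {i, j} dvd det (M * Z)"
  proof (rule pow_dvd_det_of_cols_dvd)
    fix r c assume c: "c \<in> {i, j}" and r: "r < n"
    have "(M * Z) $$ (r, c) = (M *\<^sub>v col Z c) $ r"
      using M Z r c i j by auto
    moreover have "col Z c = (if c = i then u' else w')"
      using c i j ij by (auto simp: Z_def u'_def w'_def)
    ultimately show "p dvd (M * Z) $$ (r, c)"
      using Mu' Mw' M r by (auto simp: vec_dvd_def)
  qed (use M Z i j in auto)
  then have "p^2 dvd det M * det Z"
    using ij det_mult[OF M Z] by (simp add: power2_eq_square)
  with Z_coprime show ?thesis
    using coprime_dvd_mult_left_iff by blast
qed

lemma kernel_mod_prime_lin_dependent:
  fixes M :: "int mat"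
  assumes M: "M \<in> carrier_mat n n" and p: "prime p" and sq: "\<not> p^2 dvd det M"
    and u: "u \<in> carrier_vec n" and Mu: "vec_dvd p (M *\<^sub>v u)"
    and v: "v \<in> carrier_vec n" and Mv: "vec_dvd p (M *\<^sub>v v)"
  shows "lin_dependent_mod p u v"
proof (cases "vec_dvd p u")
  case True
  then have "vec_dvd p (1 \<cdot>\<^sub>v u + 0 \<cdot>\<^sub>v v)"
    using u v by (simp add: vec_dvd_def)
  moreover have "\<not> p dvd 1"
    using p not_prime_unit by blast
  ultimately show ?thesis
    unfolding lin_dependent_mod_def by blast
next
  case False
  obtain i where i: "i < n" "\<not> p dvd u $ i" "\<And>k. i < k \<Longrightarrow> k < n \<Longrightarrow> p dvd u $ k"
    using last_nondvd_index[OF u False] by blast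
  define w where "w = (- v $ i) \<cdot>\<^sub>v u + u $ i \<cdot>\<^sub>v v"
  have w: "w \<in> carrier_vec n" and "w $ i = 0"
    using u v i by (auto simp: w_def)
  have Mw: "vec_dvd p (M *\<^sub>v w)"
    unfolding w_def mult_mat_vec_lincomb[OF M u v] using M Mu Mv by (intro vec_dvd_lincomb) auto
  show ?thesis
  proof (cases "vec_dvd p w")
    case True
    then show ?thesis
      using i unfolding lin_dependent_mod_def w_def by auto
  next
    case False
    obtain j where j: "j < n" "\<not> p dvd w $ j" "\<And>k. j < k \<Longrightarrow> k < n \<Longrightarrow> p dvd w $ k"
      using last_nondvd_index[OF w False] by blast
    with \<open>w $ i = 0\<close> have "i \<noteq> j" by auto
    have "p^2 dvd det M"
      by (rule prime_sq_dvd_det_of_two_kernel_vectors[OF M p u Mu w Mw])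
        (use i j \<open>i \<noteq> j\<close> in auto)
    with sq show ?thesis ..
  qed
qed

lemma prime_dvd_det_of_kernel_vector:
  fixes M :: "int mat"
  assumes M: "M \<in> carrier_mat n n" and p: "prime p"
    and z: "z \<in> carrier_vec n" "\<not> vec_dvd p z" and Mz: "vec_dvd p (M *\<^sub>v z)"
  shows "p dvd det M"
proof -
  obtain i where i: "i < n" "\<not> p dvd z $ i"
    using z unfolding vec_dvd_def by auto
  have "det M \<cdot>\<^sub>v z = (det M \<cdot>\<^sub>m 1\<^sub>m n) *\<^sub>v z"
    using z by auto
  also have "\<dots> = (adj_mat M * M) *\<^sub>v z"
    by (simp add: adj_mat(3)[OF M])
  also have "\<dots> = adj_mat M *\<^sub>v (M *\<^sub>v z)"
    using adj_mat(1)[OF M] M z(1) by (rule assoc_mult_mat_vec)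
  finally have "vec_dvd p (det M \<cdot>\<^sub>v z)"
    using adj_mat(1)[OF M] M Mz vec_dvd_mult_mat_vec[of p "M *\<^sub>v z" "adj_mat M"] by simp
  then have "p dvd det M * z $ i"
    using i z by (simp add: vec_dvd_def)
  with i p show ?thesis
    by (simp add: prime_dvd_mult_iff)
qed

lemma adj_mat_col_not_vec_dvd:
  fixes M :: "int mat"
  assumes M: "M \<in> carrier_mat n n" and p: "prime p"
    and dvd: "p dvd det M" and sq: "\<not> p^2 dvd det M"
  obtains c where "c < n" and "\<not> vec_dvd p (col (adj_mat M) c)"
proof (rule ccontr)
  assume "\<not> thesis"
  with that have cols: "vec_dvd p (col (adj_mat M) c)" if "c < n" for c
    using that by blast
  have adj: "adj_mat M \<in> carrier_mat n n" by (rule adj_mat(1)[OF M])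
  have adj_dvd: "p ^ card {0..<n} dvd det (adj_mat M)"
    by (rule pow_dvd_det_of_cols_dvd[OF adj]) (use cols adj in \<open>auto simp: vec_dvd_def\<close>)
  have "n \<noteq> 0"
  proof
    assume "n = 0"
    then have "M = 1\<^sub>m 0" using M by (intro eq_matI) auto
    with dvd p show False using not_prime_unit by auto
  qed
  then obtain m where n: "n = Suc m" by (cases n) auto
  have "det M \<noteq> 0" using sq by auto
  moreover have "det M * det (adj_mat M) = det M ^ n"
    using det_mult[OF M adj] adj_mat(2)[OF M] M by simp
  ultimately have "det (adj_mat M) = det M ^ m" using n by simp
  moreover obtain r where r: "det M = p * r"
    using dvd by blast
  ultimately have "p ^ m * p dvd p ^ m * r ^ m"
    using adj_dvd n by (simp add: power_mult_distrib mult.commute)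
  then have "p dvd r ^ m"
    using p by (simp add: prime_gt_0_int)
  then have "p dvd r"
    using p prime_dvd_power by blast
  then show False
    using sq r by (simp add: power2_eq_square)
qed

lemma right_kernel_vector_mod_prime:
  fixes M :: "int mat"
  assumes M: "M \<in> carrier_mat n n" and p: "prime p" and sq: "\<not> p^2 dvd det M"
    and z: "z \<in> carrier_vec n" "\<not> vec_dvd p z" and Mz: "vec_dvd p (transpose_mat M *\<^sub>v z)"
  obtains a where "a \<in> carrier_vec n" and "\<not> vec_dvd p a" and "vec_dvd p (M *\<^sub>v a)"
proof -
  have "transpose_mat M \<in> carrier_mat n n"
    using M by simp
  then have "p dvd det (transpose_mat M)"
    using p z Mz by (rule prime_dvd_det_of_kernel_vector)
  then have dvd: "p dvd det M"
    by (simp add: det_transpose[OF M])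
  obtain c where c: "c < n" "\<not> vec_dvd p (col (adj_mat M) c)"
    by (rule adj_mat_col_not_vec_dvd[OF M p dvd sq])
  have "vec_dvd p (M *\<^sub>v col (adj_mat M) c)"
    unfolding col_mult2[OF M adj_mat(1)[OF M] c(1), symmetric] adj_mat(2)[OF M] vec_dvd_def
    using dvd c(1) by simp
  moreover have "col (adj_mat M) c \<in> carrier_vec n"
    using adj_mat(1)[OF M] by (metis carrier_matD(1) carrier_vecI dim_col)
  ultimately show thesis
    using c(2) that by blast
qed

section \<open>Walk vectors\<close>

lemma pow_mat_add:
  fixes A :: "'a :: semiring_1 mat"
  assumes A: "A \<in> carrier_mat n n"
  shows "A ^\<^sub>m (i + j) = A ^\<^sub>m i * A ^\<^sub>m j"
proof (induction j)
  case 0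
  then show ?case using A by simp
next
  case (Suc j)
  have "A ^\<^sub>m (i + Suc j) = (A ^\<^sub>m i * A ^\<^sub>m j) * A"
    using Suc by simp
  also have "\<dots> = A ^\<^sub>m i * (A ^\<^sub>m j * A)"
    using A by (intro assoc_mult_mat[of _ n n _ n _ n]) auto
  finally show ?case by simp
qed

definition walk_vec :: "int mat \<Rightarrow> nat \<Rightarrow> int vec" where
  "walk_vec S k = S ^\<^sub>m k *\<^sub>v vec (dim_row S) (\<lambda>_. 1)"

lemma walk_vec_carrier:
  assumes "S \<in> carrier_mat n n"
  shows "walk_vec S k \<in> carrier_vec n"
  using assms unfolding walk_vec_def by (intro mult_mat_vec_carrier[of _ n n]) auto

lemma walk_vec_add:
  assumes S: "S \<in> carrier_mat n n"
  shows "walk_vec S (l + k) = S ^\<^sub>m l *\<^sub>v walk_vec S k"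
  using S unfolding walk_vec_def pow_mat_add[OF S]
  by (intro assoc_mult_mat_vec[of _ n n _ n]) auto

lemma walk_vec_Suc:
  assumes S: "S \<in> carrier_mat n n"
  shows "walk_vec S (Suc k) = S *\<^sub>v walk_vec S k"
  using walk_vec_add[OF S, of 1 k] S by simp

lemma transpose_walk_mat_mult_vec_index:
  assumes S: "S \<in> carrier_mat n n" and k: "k < n"
  shows "(transpose_mat (walk_mat n S) *\<^sub>v v) $ k = walk_vec S k \<bullet> v"
proof -
  have "col (walk_mat n S) k = walk_vec S k"
    using k walk_vec_carrier[OF S, of k] S by (intro eq_vecI) (auto simp: walk_mat_def walk_vec_def)
  then show ?thesis
    using k by (simp add: walk_mat_def)
qed

lemma vec_dvd_transpose_walk_mat_iff:
  assumes "S \<in> carrier_mat n n"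
  shows "vec_dvd p (transpose_mat (walk_mat n S) *\<^sub>v v) \<longleftrightarrow> (\<forall>k<n. p dvd walk_vec S k \<bullet> v)"
proof -
  have "dim_vec (transpose_mat (walk_mat n S) *\<^sub>v v) = n"
    by (simp add: walk_mat_def)
  then show ?thesis
    unfolding vec_dvd_def using transpose_walk_mat_mult_vec_index[OF assms] by auto
qed

lemma walk_vec_scalar_prod_shift:
  assumes S: "S \<in> carrier_mat n n" and z: "z \<in> carrier_vec n"
  shows "walk_vec S k \<bullet> (transpose_mat (S ^\<^sub>m l) *\<^sub>v z) = walk_vec S (l + k) \<bullet> z"
proof -
  have Sl: "S ^\<^sub>m l \<in> carrier_mat n n" using S by simp
  have "walk_vec S k \<bullet> (transpose_mat (S ^\<^sub>m l) *\<^sub>v z) = (transpose_mat (S ^\<^sub>m l) *\<^sub>v z) \<bullet> walk_vec S k"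
    using Sl z walk_vec_carrier[OF S] by (intro comm_scalar_prod[of _ n]) auto
  also have "\<dots> = z \<bullet> walk_vec S (l + k)"
    using transpose_vec_mult_scalar[OF Sl walk_vec_carrier[OF S] z] walk_vec_add[OF S] by simp
  also have "\<dots> = walk_vec S (l + k) \<bullet> z"
    using z walk_vec_carrier[OF S] by (rule comm_scalar_prod)
  finally show ?thesis .
qed

lemma scalar_prod_walk_mat_mult_vec:
  assumes S: "S \<in> carrier_mat n n" and a: "a \<in> carrier_vec n" and y: "y \<in> carrier_vec n"
  shows "y \<bullet> (walk_mat n S *\<^sub>v a) = (\<Sum>k<n. a $ k * (walk_vec S k \<bullet> y))"
proof -
  have W: "walk_mat n S \<in> carrier_mat n n" by (simp add: walk_mat_def)
  have "y \<bullet> (walk_mat n S *\<^sub>v a) = (transpose_mat (walk_mat n S) *\<^sub>v y) \<bullet> a"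
    using transpose_vec_mult_scalar[OF W a y] by simp
  also have "\<dots> = (\<Sum>k<n. (transpose_mat (walk_mat n S) *\<^sub>v y) $ k * a $ k)"
    using a by (simp add: scalar_prod_def atLeast0LessThan)
  also have "\<dots> = (\<Sum>k<n. a $ k * (walk_vec S k \<bullet> y))"
    by (intro sum.cong) (simp_all add: transpose_walk_mat_mult_vec_index[OF S] mult.commute)
  finally show ?thesis .
qed

lemma walk_vec_dim_scalar_prod_dvd:
  assumes S: "S \<in> carrier_mat n n" and p: "prime p" and sq: "\<not> p^2 dvd det (walk_mat n S)"
    and z: "z \<in> carrier_vec n" "\<not> vec_dvd p z"
    and Wz: "vec_dvd p (transpose_mat (walk_mat n S) *\<^sub>v z)"
  shows "p dvd walk_vec S n \<bullet> z"
proof -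
  define f where "f j = walk_vec S j \<bullet> z" for j
  have W: "walk_mat n S \<in> carrier_mat n n" by (simp add: walk_mat_def)
  have f: "p dvd f k" if "k < n" for k
    using Wz that by (simp add: vec_dvd_transpose_walk_mat_iff[OF S] f_def)
  obtain a where a: "a \<in> carrier_vec n" "\<not> vec_dvd p a" and Wa: "vec_dvd p (walk_mat n S *\<^sub>v a)"
    using right_kernel_vector_mod_prime[OF W p sq z Wz] by blast
  obtain d where d: "d < n" "\<not> p dvd a $ d" and tail: "\<And>k. d < k \<Longrightarrow> k < n \<Longrightarrow> p dvd a $ k"
    using last_nondvd_index[OF a] by blast
  \<comment> \<open>Pairing W a with (S^T)^(n-d) z puts a_d on S^n e, the lower coefficients on the known
    multiples f (n - d + k) of p, and the higher ones vanish modulo p.\<close>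
  define y where "y = transpose_mat (S ^\<^sub>m (n - d)) *\<^sub>v z"
  have y: "y \<in> carrier_vec n"
    unfolding y_def using S z by (intro mult_mat_vec_carrier[of _ n n]) auto
  have "y \<bullet> (walk_mat n S *\<^sub>v a) = (\<Sum>k<n. a $ k * f (n - d + k))"
    using scalar_prod_walk_mat_mult_vec[OF S a(1) y] walk_vec_scalar_prod_shift[OF S z(1)]
    by (simp add: y_def f_def)
  moreover have "p dvd y \<bullet> (walk_mat n S *\<^sub>v a)"
    using Wa W y by (intro vec_dvd_scalar_prod) auto
  moreover have "(\<Sum>k<n. a $ k * f (n - d + k))
      = a $ d * f n + (\<Sum>k\<in>{..<n} - {d}. a $ k * f (n - d + k))"
    using d by (simp add: sum.remove)
  moreover have "p dvd (\<Sum>k\<in>{..<n} - {d}. a $ k * f (n - d + k))"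
  proof (rule dvd_sum)
    fix k assume k: "k \<in> {..<n} - {d}"
    show "p dvd a $ k * f (n - d + k)"
    proof (cases "k < d")
      case True
      then show ?thesis using f[of "n - d + k"] d by simp
    next
      case False
      then show ?thesis using tail[of k] k by simp
    qed
  qed
  ultimately have "p dvd a $ d * f n"
    by (simp add: dvd_add_left_iff)
  with d p show ?thesis
    by (simp add: prime_dvd_mult_iff f_def)
qed

lemma walk_kernel_transpose_closed:
  assumes S: "S \<in> carrier_mat n n" and p: "prime p" and sq: "\<not> p^2 dvd det (walk_mat n S)"
    and z: "z \<in> carrier_vec n" and Wz: "vec_dvd p (transpose_mat (walk_mat n S) *\<^sub>v z)"
  shows "vec_dvd p (transpose_mat (walk_mat n S) *\<^sub>v (transpose_mat S *\<^sub>v z))"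
proof (cases "vec_dvd p z")
  case True
  then have "vec_dvd p (transpose_mat S *\<^sub>v z)"
    using vec_dvd_mult_mat_vec[OF True] S z by auto
  then show ?thesis
    using vec_dvd_mult_mat_vec S by (auto simp: walk_mat_def)
next
  case False
  have "p dvd walk_vec S k \<bullet> (transpose_mat S *\<^sub>v z)" if k: "k < n" for k
  proof -
    have "walk_vec S k \<bullet> (transpose_mat S *\<^sub>v z) = walk_vec S (Suc k) \<bullet> z"
      using walk_vec_scalar_prod_shift[OF S z, of k 1] S by simp
    moreover have "p dvd walk_vec S (Suc k) \<bullet> z"
    proof (cases "Suc k < n")
      case True
      then show ?thesis using Wz by (simp add: vec_dvd_transpose_walk_mat_iff[OF S])
    next
      case False
      then have "Suc k = n" using k by simp
      then show ?thesis using walk_vec_dim_scalar_prod_dvd[OF S p sq z \<open>\<not> vec_dvd p z\<close> Wz] by simp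
    qed
    ultimately show ?thesis by simp
  qed
  then show ?thesis
    by (simp add: vec_dvd_transpose_walk_mat_iff[OF S])
qed

lemma transpose_mult_walk_vec_of_anticommuting:
  assumes S: "S \<in> carrier_mat n n" and P: "P \<in> carrier_mat n n"
    and skew: "transpose_mat S = - S" and anti: "S * P = - (P * S)"
    and Pe: "transpose_mat P *\<^sub>v vec n (\<lambda>_. 1) = c \<cdot>\<^sub>v vec n (\<lambda>_. 1)"
  shows "transpose_mat P *\<^sub>v walk_vec S k = ((-1)^k * c) \<cdot>\<^sub>v walk_vec S k"
proof -
  have PT: "transpose_mat P \<in> carrier_mat n n" using P by simp
  have "transpose_mat P * transpose_mat S = - (transpose_mat S * transpose_mat P)"
    using arg_cong[OF anti, of transpose_mat] S P by (simp add: transpose_mult transpose_uminus)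
  then have "- (- (transpose_mat P * S)) = - (S * transpose_mat P)"
    using S PT unfolding skew by simp
  then have PTS: "transpose_mat P * S = - (S * transpose_mat P)"
    by simp
  have PS: "transpose_mat P *\<^sub>v (S *\<^sub>v x) = - (S *\<^sub>v (transpose_mat P *\<^sub>v x))"
    if x: "x \<in> carrier_vec n" for x
  proof -
    have "transpose_mat P *\<^sub>v (S *\<^sub>v x) = (transpose_mat P * S) *\<^sub>v x"
      using PT S x by simp
    also have "\<dots> = - (S * transpose_mat P) *\<^sub>v x"
      by (simp only: PTS)
    also have "\<dots> = - (S *\<^sub>v (transpose_mat P *\<^sub>v x))"
      using PT S x by simp
    finally show ?thesis .
  qed
  show ?thesis
  proof (induction k)
    case 0
    then show ?case using Pe S by (simp add: walk_vec_def)
  next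
    case (Suc k)
    then show ?case
      using PS[OF walk_vec_carrier[OF S]] S walk_vec_carrier[OF S, of k]
      by (simp add: walk_vec_Suc[OF S]) (intro eq_vecI; simp add: scalar_prod_smult_right)
  qed
qed

lemma walk_kernel_anticommuting_closed:
  assumes S: "S \<in> carrier_mat n n" and P: "P \<in> carrier_mat n n"
    and skew: "transpose_mat S = - S" and anti: "S * P = - (P * S)"
    and Pe: "transpose_mat P *\<^sub>v vec n (\<lambda>_. 1) = c \<cdot>\<^sub>v vec n (\<lambda>_. 1)"
    and z: "z \<in> carrier_vec n" and Wz: "vec_dvd p (transpose_mat (walk_mat n S) *\<^sub>v z)"
  shows "vec_dvd p (transpose_mat (walk_mat n S) *\<^sub>v (P *\<^sub>v z))"
proof -
  have "p dvd walk_vec S k \<bullet> (P *\<^sub>v z)" if "k < n" for k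
  proof -
    have "walk_vec S k \<bullet> (P *\<^sub>v z) = (transpose_mat P *\<^sub>v walk_vec S k) \<bullet> z"
      using transpose_vec_mult_scalar[OF P z walk_vec_carrier[OF S]] by simp
    also have "\<dots> = ((-1)^k * c) * (walk_vec S k \<bullet> z)"
      using z walk_vec_carrier[OF S]
      by (simp add: transpose_mult_walk_vec_of_anticommuting[OF S P skew anti Pe])
    finally show ?thesis
      using Wz that by (simp add: vec_dvd_transpose_walk_mat_iff[OF S])
  qed
  then show ?thesis
    by (simp add: vec_dvd_transpose_walk_mat_iff[OF S])
qed

lemma dvd_two_mult_of_anticommuting_relations:
  fixes p a1 b1 a2 b2 z s w t :: int
  assumes "p dvd a1 * z + b1 * s" and "p dvd a2 * z + b2 * w"
    and "p dvd a1 * w + b1 * t" and "p dvd a2 * s + - b2 * t"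
  shows "p dvd 2 * a1 * a2 * z"
proof -
  have "p dvd b2 * (a1 * w + b1 * t) + b1 * (a2 * s + - b2 * t)
             - a1 * (a2 * z + b2 * w) - a2 * (a1 * z + b1 * s)"
    using assms by (blast intro: dvd_diff dvd_add dvd_mult)
  also have "\<dots> = - (2 * a1 * a2 * z)"
    by (simp add: algebra_simps)
  finally show ?thesis
    by simp
qed

lemma vec_dvd_of_mult_vec_dvd_scaled_orthogonal:
  fixes P :: "int mat"
  assumes P: "P \<in> carrier_mat n n" and PTP: "transpose_mat P * P = c \<cdot>\<^sub>m 1\<^sub>m n"
    and c: "\<not> p dvd c" and p: "prime p" and z: "z \<in> carrier_vec n"
    and Pz: "vec_dvd p (P *\<^sub>v z)"
  shows "vec_dvd p z"
proof -
  have "vec_dvd p (transpose_mat P *\<^sub>v (P *\<^sub>v z))"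
    using vec_dvd_mult_mat_vec[OF Pz, of "transpose_mat P"] P by simp
  also have "transpose_mat P *\<^sub>v (P *\<^sub>v z) = (c \<cdot>\<^sub>m 1\<^sub>m n) *\<^sub>v z"
    using P z by (simp add: PTP flip: assoc_mult_mat_vec)
  also have "\<dots> = c \<cdot>\<^sub>v z"
    using z by auto
  finally show ?thesis
    using c p z by (auto simp: vec_dvd_def prime_dvd_mult_iff)
qed

lemma vec_dvd_two_mult_of_anticommuting:
  fixes S P :: "int mat"
  assumes S: "S \<in> carrier_mat n n" and P: "P \<in> carrier_mat n n"
    and skew: "transpose_mat S = - S" and anti: "S * P = - (P * S)" and z: "z \<in> carrier_vec n"
    and D1: "vec_dvd p (a1 \<cdot>\<^sub>v z + b1 \<cdot>\<^sub>v (transpose_mat S *\<^sub>v z))"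
    and D2: "vec_dvd p (a2 \<cdot>\<^sub>v z + b2 \<cdot>\<^sub>v (P *\<^sub>v z))"
  shows "vec_dvd p ((2 * a1 * a2) \<cdot>\<^sub>v z)"
proof -
  define s w where "s = transpose_mat S *\<^sub>v z" and "w = P *\<^sub>v z"
  have s: "s \<in> carrier_vec n" and w: "w \<in> carrier_vec n" and Sw: "S *\<^sub>v w \<in> carrier_vec n"
    using S P z by (auto simp: s_def w_def)
  have "P *\<^sub>v s = (P * transpose_mat S) *\<^sub>v z"
    using P S z by (simp add: s_def)
  also have "P * transpose_mat S = S * P"
    using anti P S by (simp add: skew)
  finally have Ps: "P *\<^sub>v s = S *\<^sub>v w"
    using S P z by (simp add: w_def)
  have E1: "vec_dvd p (a1 \<cdot>\<^sub>v w + b1 \<cdot>\<^sub>v (S *\<^sub>v w))"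
    using vec_dvd_mult_mat_vec[OF D1, of P] P z s
    by (simp add: mult_mat_vec_lincomb[OF P z s] Ps flip: s_def w_def)
  have STw: "transpose_mat S *\<^sub>v w = - (S *\<^sub>v w)"
    using S w by (simp add: skew)
  have "transpose_mat S *\<^sub>v (a2 \<cdot>\<^sub>v z + b2 \<cdot>\<^sub>v w) = a2 \<cdot>\<^sub>v s + (- b2) \<cdot>\<^sub>v (S *\<^sub>v w)"
    using S z w Sw by (simp add: mult_mat_vec_lincomb[of _ n n] STw flip: s_def) (intro eq_vecI; simp)
  then have E2: "vec_dvd p (a2 \<cdot>\<^sub>v s + (- b2) \<cdot>\<^sub>v (S *\<^sub>v w))"
    using vec_dvd_mult_mat_vec[OF D2, of "transpose_mat S"] S z w by (simp flip: w_def)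
  show ?thesis
    unfolding vec_dvd_def
  proof (intro allI impI)
    fix i assume "i < dim_vec ((2 * a1 * a2) \<cdot>\<^sub>v z)"
    then have i: "i < n" using z by simp
    have "p dvd 2 * a1 * a2 * z $ i"
    proof (rule dvd_two_mult_of_anticommuting_relations)
      show "p dvd a1 * z $ i + b1 * s $ i" and "p dvd a2 * z $ i + b2 * w $ i"
        and "p dvd a1 * w $ i + b1 * (S *\<^sub>v w) $ i" and "p dvd a2 * s $ i + - b2 * (S *\<^sub>v w) $ i"
        using D1 D2 E1 E2 i z s w Sw by (simp_all add: vec_dvd_lincomb_iff flip: s_def w_def)
    qed
    then show "p dvd ((2 * a1 * a2) \<cdot>\<^sub>v z) $ i"
      using i z by simp
  qed
qed

lemma transpose_mult_vec_dvd_of_anticommuting: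
  fixes S P :: "int mat"
  assumes p: "prime p" and p2: "\<not> p dvd 2"
    and S: "S \<in> carrier_mat n n" and P: "P \<in> carrier_mat n n"
    and skew: "transpose_mat S = - S" and anti: "S * P = - (P * S)"
    and PTP: "transpose_mat P * P = c \<cdot>\<^sub>m 1\<^sub>m n" and c: "\<not> p dvd c"
    and z: "z \<in> carrier_vec n"
    and dep_S: "lin_dependent_mod p z (transpose_mat S *\<^sub>v z)"
    and dep_P: "lin_dependent_mod p z (P *\<^sub>v z)"
  shows "vec_dvd p (transpose_mat S *\<^sub>v z)"
proof (cases "vec_dvd p z")
  case True
  then show ?thesis
    using vec_dvd_mult_mat_vec[OF True] S z by auto
next
  case False
  then obtain i0 where i0: "i0 < n" "\<not> p dvd z $ i0"
    using z by (auto simp: vec_dvd_def)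
  obtain a1 b1 where ab1: "\<not> (p dvd a1 \<and> p dvd b1)"
    and D1: "vec_dvd p (a1 \<cdot>\<^sub>v z + b1 \<cdot>\<^sub>v (transpose_mat S *\<^sub>v z))"
    using dep_S unfolding lin_dependent_mod_def by blast
  obtain a2 b2 where ab2: "\<not> (p dvd a2 \<and> p dvd b2)" and D2: "vec_dvd p (a2 \<cdot>\<^sub>v z + b2 \<cdot>\<^sub>v (P *\<^sub>v z))"
    using dep_P unfolding lin_dependent_mod_def by blast
  have "p dvd 2 * a1 * a2 * z $ i0"
    using vec_dvd_two_mult_of_anticommuting[OF S P skew anti z D1 D2] i0(1) z
    by (simp add: vec_dvd_def)
  then have "p dvd a1 \<or> p dvd a2"
    using i0(2) p p2 by (simp add: prime_dvd_mult_iff)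
  then show ?thesis
  proof
    assume "p dvd a1"
    then show ?thesis
      using vec_dvd_of_lincomb[OF D1 _ _ p z] ab1 S z by simp
  next
    assume "p dvd a2"
    then have "vec_dvd p (P *\<^sub>v z)"
      using vec_dvd_of_lincomb[OF D2 _ _ p z] ab2 P z by simp
    with P PTP c p z have "vec_dvd p z"
      by (rule vec_dvd_of_mult_vec_dvd_scaled_orthogonal)
    with False show ?thesis by contradiction
  qed
qed

section \<open>Integral multiples of rational orthogonal matrices\<close>

lemma level_mult_entry_Ints:
  fixes Q :: "rat mat"
  assumes Q: "Q \<in> carrier_mat n n" and ij: "i < n" "j < n"
  shows "of_nat (level Q) * Q $$ (i, j) \<in> \<int>"
proof -
  \<comment> \<open>the product of all denominators is a positive integral multiplier\<close>
  define D where "D = (\<Prod>ij\<in>{0..<n} \<times> {0..<n}. snd (quotient_of (Q $$ ij)))"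
  have D: "D > 0"
    unfolding D_def by (rule prod_pos) (auto intro: quotient_of_denom_pos')
  have "of_nat (nat D) * Q $$ (i', j') \<in> \<int>" if "i' < n" "j' < n" for i' j'
  proof -
    obtain a b where ab: "quotient_of (Q $$ (i', j')) = (a, b)"
      by (cases "quotient_of (Q $$ (i', j'))")
    have "b dvd D"
      using dvd_prodI[of "{0..<n} \<times> {0..<n}" "(i', j')" "\<lambda>ij. snd (quotient_of (Q $$ ij))"] that ab
      by (auto simp: D_def)
    then obtain t where t: "D = b * t" by blast
    have "of_nat (nat D) * Q $$ (i', j') = (of_int (b * t) :: rat) * (of_int a / of_int b)"
      using D t quotient_of_div[OF ab] by simp
    also have "\<dots> = of_int (a * t)"
      using quotient_of_denom_pos[OF ab] by (simp add: field_simps)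
    finally show ?thesis by simp
  qed
  then have "\<exists>k::nat. k > 0 \<and> (\<forall>i < dim_row Q. \<forall>j < dim_col Q. of_nat k * Q $$ (i, j) \<in> \<int>)"
    using D Q by (intro exI[of _ "nat D"]) auto
  from LeastI_ex[OF this] show ?thesis
    using Q ij unfolding level_def by blast
qed

lemma integral_level_multiple:
  fixes Q :: "rat mat"
  assumes Q: "Q \<in> carrier_mat n n"
  obtains P where "P \<in> carrier_mat n n" and "map_mat rat_of_int P = of_nat (level Q) \<cdot>\<^sub>m Q"
proof
  let ?P = "mat n n (\<lambda>ij. \<lfloor>of_nat (level Q) * Q $$ ij\<rfloor>)"
  show "?P \<in> carrier_mat n n" by simp
  show "map_mat rat_of_int ?P = of_nat (level Q) \<cdot>\<^sub>m Q"
    using Q level_mult_entry_Ints[OF Q] by (intro eq_matI) auto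
qed

lemma orthogonal_conj_neg_imp_anticommute:
  fixes Q S :: "'a :: field mat"
  assumes Q: "Q \<in> carrier_mat n n" and S: "S \<in> carrier_mat n n"
    and orth: "transpose_mat Q * Q = 1\<^sub>m n" and conj: "transpose_mat Q * S * Q = - S"
  shows "S * Q = - (Q * S)"
proof -
  have QT: "transpose_mat Q \<in> carrier_mat n n" using Q by simp
  have "S * Q = (Q * transpose_mat Q) * S * Q"
    using mat_mult_left_right_inverse[OF QT Q orth] S Q by simp
  also have "\<dots> = Q * (transpose_mat Q * S * Q)"
    using Q QT S by (simp add: assoc_mult_mat[of _ n n _ n _ n])
  also have "\<dots> = - (Q * S)"
    using Q S by (simp add: conj)
  finally show ?thesis .
qed

lemma regular_orthogonal_transpose_ones:
  assumes orth: "rat_orthogonal n Q" and reg: "regular n Q"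
  shows "transpose_mat Q *\<^sub>v vec n (\<lambda>_. 1) = vec n (\<lambda>_. 1)"
proof -
  have Q: "Q \<in> carrier_mat n n" and QTQ: "transpose_mat Q * Q = 1\<^sub>m n"
    using orth by (auto simp: rat_orthogonal_def)
  have "transpose_mat Q *\<^sub>v vec n (\<lambda>_. 1) = (transpose_mat Q * Q) *\<^sub>v vec n (\<lambda>_. 1)"
    using reg Q by (simp add: regular_def)
  also have "\<dots> = vec n (\<lambda>_. 1)"
    by (simp add: QTQ)
  finally show ?thesis .
qed

lemma scaled_integral_anticommute:
  fixes S P :: "int mat" and Q :: "rat mat"
  assumes S: "S \<in> carrier_mat n n" and P: "P \<in> carrier_mat n n" and Q: "Q \<in> carrier_mat n n"
    and Pr: "map_mat rat_of_int P = of_nat l \<cdot>\<^sub>m Q" and QTQ: "transpose_mat Q * Q = 1\<^sub>m n"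
    and conj: "transpose_mat Q * map_mat rat_of_int S * Q = map_mat rat_of_int (- S)"
  shows "S * P = - (P * S)"
proof -
  let ?Sr = "map_mat rat_of_int S"
  have Sr: "?Sr \<in> carrier_mat n n" using S by simp
  have "map_mat rat_of_int (- S) = - ?Sr"
    by (intro eq_matI) auto
  with conj have conj: "transpose_mat Q * ?Sr * Q = - ?Sr"
    by simp
  have "map_mat rat_of_int (S * P) = of_nat l \<cdot>\<^sub>m (?Sr * Q)"
    using S P Q by (simp add: of_int_hom.mat_hom_mult[OF S P] Pr mult_smult_distrib[OF Sr Q])
  also have "\<dots> = of_nat l \<cdot>\<^sub>m (- (Q * ?Sr))"
    by (simp add: orthogonal_conj_neg_imp_anticommute[OF Q Sr QTQ conj])
  also have "\<dots> = - ((of_nat l \<cdot>\<^sub>m Q) * ?Sr)"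
    unfolding mult_smult_assoc_mat[OF Q Sr] by (intro eq_matI) auto
  also have "\<dots> = map_mat rat_of_int (- (P * S))"
    unfolding Pr[symmetric] of_int_hom.mat_hom_mult[OF P S, symmetric] by (intro eq_matI) auto
  finally show ?thesis
    by (rule of_int_hom.mat_hom_inj)
qed

lemma scaled_integral_orthogonal:
  fixes P :: "int mat" and Q :: "rat mat"
  assumes P: "P \<in> carrier_mat n n" and Q: "Q \<in> carrier_mat n n"
    and Pr: "map_mat rat_of_int P = of_nat l \<cdot>\<^sub>m Q" and QTQ: "transpose_mat Q * Q = 1\<^sub>m n"
  shows "transpose_mat P * P = (int l)^2 \<cdot>\<^sub>m 1\<^sub>m n"
proof -
  have QT: "transpose_mat Q \<in> carrier_mat n n" using Q by simp
  have PTr: "map_mat rat_of_int (transpose_mat P) = of_nat l \<cdot>\<^sub>m transpose_mat Q"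
    unfolding map_mat_transpose[symmetric] Pr by (intro eq_matI) auto
  have "map_mat rat_of_int (transpose_mat P * P) = (of_nat l \<cdot>\<^sub>m transpose_mat Q) * (of_nat l \<cdot>\<^sub>m Q)"
    using P by (simp add: of_int_hom.mat_hom_mult[of _ n n _ n] PTr Pr)
  also have "\<dots> = (of_nat l * of_nat l) \<cdot>\<^sub>m (transpose_mat Q * Q)"
    unfolding mult_smult_assoc_mat[OF QT smult_carrier_mat[OF Q]] mult_smult_distrib[OF QT Q]
    by (intro eq_matI) auto
  also have "\<dots> = map_mat rat_of_int ((int l)^2 \<cdot>\<^sub>m 1\<^sub>m n)"
    by (auto simp: QTQ power2_eq_square intro!: eq_matI)
  finally show ?thesis
    by (rule of_int_hom.mat_hom_inj)
qed

lemma scaled_integral_regular: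
  fixes P :: "int mat" and Q :: "rat mat"
  assumes P: "P \<in> carrier_mat n n" and Pr: "map_mat rat_of_int P = of_nat l \<cdot>\<^sub>m Q"
    and orth: "rat_orthogonal n Q" and reg: "regular n Q"
  shows "transpose_mat P *\<^sub>v vec n (\<lambda>_. 1) = int l \<cdot>\<^sub>v vec n (\<lambda>_. 1)"
proof -
  have Q: "Q \<in> carrier_mat n n"
    using orth by (simp add: rat_orthogonal_def)
  have PTr: "map_mat rat_of_int (transpose_mat P) = of_nat l \<cdot>\<^sub>m transpose_mat Q"
    unfolding map_mat_transpose[symmetric] Pr by (intro eq_matI) auto
  have ones: "map_vec rat_of_int (vec n (\<lambda>_. 1)) = vec n (\<lambda>_. 1)"
    by (intro eq_vecI) auto
  have "map_vec rat_of_int (transpose_mat P *\<^sub>v vec n (\<lambda>_. 1))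
      = map_mat rat_of_int (transpose_mat P) *\<^sub>v map_vec rat_of_int (vec n (\<lambda>_. 1))"
    using P by (intro of_int_hom.mult_mat_vec_hom[of _ n n]) auto
  also have "\<dots> = (of_nat l \<cdot>\<^sub>m transpose_mat Q) *\<^sub>v vec n (\<lambda>_. 1)"
    by (simp only: PTr ones)
  also have "\<dots> = of_nat l \<cdot>\<^sub>v (transpose_mat Q *\<^sub>v vec n (\<lambda>_. 1))"
    using Q by (intro eq_vecI) (auto simp: scalar_prod_smult_left)
  also have "\<dots> = map_vec rat_of_int (int l \<cdot>\<^sub>v vec n (\<lambda>_. 1))"
    unfolding regular_orthogonal_transpose_ones[OF orth reg] by (intro eq_vecI) auto
  finally show ?thesis
    by (rule of_int_hom.vec_hom_inj)
qed

lemma integral_multiple_of_regular_orthogonal: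
  fixes S :: "int mat" and Q :: "rat mat"
  assumes S: "S \<in> carrier_mat n n" and orth: "rat_orthogonal n Q" and reg: "regular n Q"
    and conj: "transpose_mat Q * map_mat rat_of_int S * Q = map_mat rat_of_int (- S)"
  obtains P where "P \<in> carrier_mat n n" and "S * P = - (P * S)"
    and "transpose_mat P * P = (int (level Q))^2 \<cdot>\<^sub>m 1\<^sub>m n"
    and "transpose_mat P *\<^sub>v vec n (\<lambda>_. 1) = int (level Q) \<cdot>\<^sub>v vec n (\<lambda>_. 1)"
proof -
  have Q: "Q \<in> carrier_mat n n" and QTQ: "transpose_mat Q * Q = 1\<^sub>m n"
    using orth by (auto simp: rat_orthogonal_def)
  obtain P where P: "P \<in> carrier_mat n n" and Pr: "map_mat rat_of_int P = of_nat (level Q) \<cdot>\<^sub>m Q"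
    using integral_level_multiple[OF Q] by blast
  show thesis
    using that[OF P scaled_integral_anticommute[OF S P Q Pr QTQ conj]
        scaled_integral_orthogonal[OF P Q Pr QTQ] scaled_integral_regular[OF P Pr orth reg]] .
qed

lemma transpose_skew_adj:
  assumes "oriented_graph n A"
  shows "transpose_mat (skew_adj n A) = - skew_adj n A"
proof (rule eq_matI)
  fix i j assume "i < dim_row (- skew_adj n A)" and "j < dim_col (- skew_adj n A)"
  moreover have "\<not> (A i j \<and> A j i)"
    using assms unfolding oriented_graph_def by blast
  ultimately show "transpose_mat (skew_adj n A) $$ (i, j) = (- skew_adj n A) $$ (i, j)"
    by (auto simp: skew_adj_def)
qed (auto simp: skew_adj_def)

lemma skew_adj_converse_graph:
  assumes "oriented_graph n A"
  shows "skew_adj n (converse_graph A) = - skew_adj n A"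
proof (rule eq_matI)
  fix i j assume "i < dim_row (- skew_adj n A)" and "j < dim_col (- skew_adj n A)"
  moreover have "\<not> (A i j \<and> A j i)"
    using assms unfolding oriented_graph_def by blast
  ultimately show "skew_adj n (converse_graph A) $$ (i, j) = (- skew_adj n A) $$ (i, j)"
    by (auto simp: skew_adj_def converse_graph_def)
qed (auto simp: skew_adj_def)

lemma in_G_prime_sq_not_dvd_det:
  assumes G: "in_G n A" and p: "prime (p::int)" and odd: "\<not> p dvd 2"
  shows "\<not> p^2 dvd det (walk_mat n (skew_adj n A))"
proof
  assume dvd: "p^2 dvd det (walk_mat n (skew_adj n A))"
  obtain m where det: "det (walk_mat n (skew_adj n A)) = 2 ^ (n div 2) * m" and "squarefree m"
    using G unfolding in_G_def by blast
  have "coprime p 2"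
    using p odd by (rule prime_imp_coprime)
  then have "coprime (p^2) (2 ^ (n div 2))"
    by simp
  then have "p^2 dvd m"
    using dvd unfolding det using coprime_dvd_mult_right_iff by blast
  with \<open>squarefree m\<close> have "is_unit p"
    unfolding squarefree_def power2_eq_square by blast
  with p show False
    using not_prime_unit by blast
qed

lemma in_G_walk_kernel_lin_dependent:
  assumes G: "in_G n A" and p: "prime p" and odd: "\<not> p dvd 2"
    and u: "u \<in> carrier_vec n" and Wu: "vec_dvd p (transpose_mat (walk_mat n (skew_adj n A)) *\<^sub>v u)"
    and v: "v \<in> carrier_vec n" and Wv: "vec_dvd p (transpose_mat (walk_mat n (skew_adj n A)) *\<^sub>v v)"
  shows "lin_dependent_mod p u v"
proof -
  have W: "walk_mat n (skew_adj n A) \<in> carrier_mat n n"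
    by (simp add: walk_mat_def)
  then have WT: "transpose_mat (walk_mat n (skew_adj n A)) \<in> carrier_mat n n"
    by simp
  have "\<not> p^2 dvd det (transpose_mat (walk_mat n (skew_adj n A)))"
    using in_G_prime_sq_not_dvd_det[OF G p odd] by (simp add: det_transpose[OF W])
  from kernel_mod_prime_lin_dependent[OF WT p this u Wu v Wv] show ?thesis .
qed

theorem lemma3p4:
  fixes n :: nat and A :: "nat \<Rightarrow> nat \<Rightarrow> bool" and Q0 :: "rat mat"
    and p :: nat and z :: "int vec"
  assumes G: "in_G n A"
    and Q0_orth: "rat_orthogonal n Q0"
    and Q0_reg: "regular n Q0"
    and Q0_conj: "transpose_mat Q0 * map_mat rat_of_int (skew_adj n A) * Q0
                  = map_mat rat_of_int (skew_adj n (converse_graph A))"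
    and p_prime: "prime p" and p_odd: "odd p"
    and p_ndvd: "\<not> p dvd level Q0"
    and z_dim: "z \<in> carrier_vec n"
    and Wz: "\<forall>i < n. int p dvd (transpose_mat (walk_mat n (skew_adj n A)) *\<^sub>v z) $ i"
  shows "\<forall>i < n. int p dvd (transpose_mat (skew_adj n A) *\<^sub>v z) $ i"
proof -
  let ?S = "skew_adj n A" and ?W = "walk_mat n (skew_adj n A)" and ?q = "int p"
  have oriented: "oriented_graph n A" using G by (simp add: in_G_def)
  have S: "?S \<in> carrier_mat n n" by (simp add: skew_adj_def)
  have skew: "transpose_mat ?S = - ?S" using oriented by (rule transpose_skew_adj)
  have q: "prime ?q" and q2: "\<not> ?q dvd 2"
    using p_prime p_odd primes_dvd_imp_eq[of ?q 2] by auto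
  obtain P where P: "P \<in> carrier_mat n n" and anti: "?S * P = - (P * ?S)"
    and PTP: "transpose_mat P * P = (int (level Q0))^2 \<cdot>\<^sub>m 1\<^sub>m n"
    and PTe: "transpose_mat P *\<^sub>v vec n (\<lambda>_. 1) = int (level Q0) \<cdot>\<^sub>v vec n (\<lambda>_. 1)"
    using integral_multiple_of_regular_orthogonal[OF S Q0_orth Q0_reg] Q0_conj
    unfolding skew_adj_converse_graph[OF oriented] by blast
  have Kz: "vec_dvd ?q (transpose_mat ?W *\<^sub>v z)"
    using Wz by (simp add: vec_dvd_def walk_mat_def)
  have KS: "vec_dvd ?q (transpose_mat ?W *\<^sub>v (transpose_mat ?S *\<^sub>v z))"
    using S q in_G_prime_sq_not_dvd_det[OF G q q2] z_dim Kz by (rule walk_kernel_transpose_closed)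
  have KP: "vec_dvd ?q (transpose_mat ?W *\<^sub>v (P *\<^sub>v z))"
    using S P skew anti PTe z_dim Kz by (rule walk_kernel_anticommuting_closed)
  have "vec_dvd ?q (transpose_mat ?S *\<^sub>v z)"
  proof (rule transpose_mult_vec_dvd_of_anticommuting[OF q q2 S P skew anti PTP _ z_dim])
    show "\<not> ?q dvd (int (level Q0))^2"
      using p_ndvd q by (simp add: prime_dvd_power_iff)
    show "lin_dependent_mod ?q z (transpose_mat ?S *\<^sub>v z)"
      using G q q2 z_dim Kz _ KS by (rule in_G_walk_kernel_lin_dependent) (use S z_dim in simp)
    show "lin_dependent_mod ?q z (P *\<^sub>v z)"
      using G q q2 z_dim Kz _ KP by (rule in_G_walk_kernel_lin_dependent) (use P z_dim in simp)
  qed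
  then show ?thesis
    by (simp add: vec_dvd_def skew_adj_def)
qed

end
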